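(* Let $\lambda \in P$ and $\lhd \in \mathrm{RO}(\lambda, \Delta^{+})$. Then the total order $<$ on $L := \mathrm{Inv}(\lambda)$ is an affine reflection order, i.e.: (1) if $\alpha^{\vee}, \beta^{\vee} \in L$ and $\alpha^{\vee}+\beta^{\vee}$ is a positive real affine coroot, then $\alpha^{\vee}+\beta^{\vee} \in L$ and either $\alpha^{\vee} < \alpha^{\vee}+\beta^{\vee} < \beta^{\vee}$ or $\beta^{\vee} < \alpha^{\vee}+\beta^{\vee} < \alpha^{\vee}$; (2) if $\alpha^{\vee}, \beta^{\vee}$ are positive real affine coroots with $\alpha^{\vee}+\beta^{\vee} \in L$, then either ($\alpha^{\vee} \in L$ and $\alpha^{\vee} < \alpha^{\vee}+\beta^{\vee}$) or ($\beta^{\vee} \in L$ and $\beta^{\vee} < \alpha^{\vee}+\beta^{\vee}$).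
   Context: Let $\mathfrak{g}$ be a finite-dimensional complex simple Lie algebra with root system $\Delta$, positive roots $\Delta^{+}$, weight lattice $P$ and pairing $\langle\cdot,\cdot\rangle$; $\alpha^\vee$ is the coroot of $\alpha$. For $\lambda\in P$, $\Delta^{+}(\lambda)_{>0}$, $\Delta^{+}(\lambda)_{=0}$, $\Delta^{+}(\lambda)_{<0}$ denote the sets of $\alpha \in \Delta^{+}$ with $\langle\lambda,\alpha^\vee\rangle$ respectively $>0$, $=0$, $<0$. A total order $\lhd$ on $\Delta^{+}$ is a reflection order if whenever $\alpha,\beta,\alpha+\beta\in\Delta^+$, either $\alpha\lhd\alpha+\beta\lhd\beta$ or $\beta\lhd\alpha+\beta\lhd\alpha$; $\mathrm{RO}(\lambda,\Delta^+)$ is the set of reflection orders $\lhd$ with $\alpha\lhd\beta\lhd\gamma$ for all $\alpha\in\Delta^+(\lambda)_{<0}$, $\beta\in\Delta^+(\lambda)_{=0}$, $\gamma\in\Delta^+(\lambda)_{>0}$. Affine coroots: let $\tilde\delta$ be a formal symbol; real affine coroots are $\gamma^{\vee}+k\tilde\delta$ ($\gamma\in\Delta$, $k\in\mathbb{Z}$); for $\beta^\vee=\gamma^\vee+k\tilde\delta$ set $\overline{\beta^\vee}:=\gamma^\vee$, $\overline{\beta}:=\gamma$, $\deg(\beta^\vee):=k$; $\beta^\vee$ is positive if $k>0$ or ($k=0$ and $\gamma\in\Delta^+$), negative otherwise. $t_\lambda(\gamma^\vee+k\tilde\delta)=\gamma^\vee+(k-\langle\lambda,\gamma^\vee\rangle)\tilde\delta$,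 and $\mathrm{Inv}(\lambda)$ is the set of positive real affine coroots $\beta^\vee$ with $t_\lambda(\beta^\vee)$ negative. For $\beta^\vee\in\mathrm{Inv}(\lambda)$ one has $\langle\lambda,\overline{\beta^\vee}\rangle>0$ and $\overline\beta\in\Delta^+(\lambda)_{>0}\sqcup(-\Delta^+(\lambda)_{<0})$; set $d(\beta^\vee):=\deg(\beta^\vee)/\langle\lambda,\overline{\beta^\vee}\rangle$. Define a total order $\prec$ on $\Delta^+(\lambda)_{>0}\sqcup(-\Delta^+(\lambda)_{<0})$: every element of $\Delta^+(\lambda)_{>0}$ precedes every element of $-\Delta^+(\lambda)_{<0}$; on $\Delta^+(\lambda)_{>0}$, $\gamma\prec\gamma'$ iff $\gamma\lhd\gamma'$; on $-\Delta^+(\lambda)_{<0}$, $-\alpha\prec-\alpha'$ iff $\alpha\lhd\alpha'$. The total order $<$ on $\mathrm{Inv}(\lambda)$ is: $\beta^\vee<\beta'^\vee$ iff $d(\beta^\vee)<d(\beta'^\vee)$, or $d(\beta^\vee)=d(\beta'^\vee)$ and $\overline{\beta'}\prec\overline{\beta}$. *)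

theory Defs
  imports "HOL-Analysis.Analysis"
begin

text \<open>The root system of a finite-dimensional complex simple Lie algebra is a reduced,
  crystallographic, irreducible root system in a real Euclidean space (the real span of the roots,
  with the Killing-form-induced inner product).\<close>

definition coroot :: "'a::euclidean_space \<Rightarrow> 'a" where
  "coroot \<alpha> = (2 / (\<alpha> \<bullet> \<alpha>)) *\<^sub>R \<alpha>"

definition pairing :: "'a::euclidean_space \<Rightarrow> 'a \<Rightarrow> real" where
  "pairing \<mu> \<alpha> = \<mu> \<bullet> coroot \<alpha>"

definition reduced_root_system :: "'a::euclidean_space set \<Rightarrow> bool" where
  "reduced_root_system \<Delta> \<longleftrightarrow>
     finite \<Delta> \<and> 0 \<notin> \<Delta> \<and> span \<Delta> = UNIV \<and>
     (\<forall>\<alpha>\<in>\<Delta>. \<forall>\<beta>\<in>\<Delta>. \<beta> - pairing \<beta> \<alpha> *\<^sub>R \<alpha> \<in> \<Delta>) \<and>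
     (\<forall>\<alpha>\<in>\<Delta>. \<forall>\<beta>\<in>\<Delta>. pairing \<beta> \<alpha> \<in> \<int>) \<and>
     (\<forall>\<alpha>\<in>\<Delta>. \<forall>c::real. c *\<^sub>R \<alpha> \<in> \<Delta> \<longrightarrow> c = 1 \<or> c = -1)"

definition irreducible_root_system :: "'a::euclidean_space set \<Rightarrow> bool" where
  "irreducible_root_system \<Delta> \<longleftrightarrow> reduced_root_system \<Delta> \<and>
     \<not> (\<exists>A B. A \<noteq> {} \<and> B \<noteq> {} \<and> A \<union> B = \<Delta> \<and> A \<inter> B = {} \<and>
            (\<forall>a\<in>A. \<forall>b\<in>B. a \<bullet> b = 0))"

definition positive_system :: "'a::euclidean_space set \<Rightarrow> 'a set \<Rightarrow> bool" where
  "positive_system \<Delta> Dp \<longleftrightarrow>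
     (\<exists>\<rho>. (\<forall>\<alpha>\<in>\<Delta>. \<rho> \<bullet> \<alpha> \<noteq> 0) \<and> Dp = {\<alpha>\<in>\<Delta>. \<rho> \<bullet> \<alpha> > 0})"

definition weight_lattice :: "'a::euclidean_space set \<Rightarrow> 'a set" where
  "weight_lattice \<Delta> = {\<mu>. \<forall>\<alpha>\<in>\<Delta>. pairing \<mu> \<alpha> \<in> \<int>}"

definition pos_part :: "'a::euclidean_space set \<Rightarrow> 'a \<Rightarrow> 'a set" where
  "pos_part Dp \<mu> = {\<alpha>\<in>Dp. pairing \<mu> \<alpha> > 0}"
definition zero_part :: "'a::euclidean_space set \<Rightarrow> 'a \<Rightarrow> 'a set" where
  "zero_part Dp \<mu> = {\<alpha>\<in>Dp. pairing \<mu> \<alpha> = 0}"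
definition neg_part :: "'a::euclidean_space set \<Rightarrow> 'a \<Rightarrow> 'a set" where
  "neg_part Dp \<mu> = {\<alpha>\<in>Dp. pairing \<mu> \<alpha> < 0}"

definition strict_total_order_on :: "'b set \<Rightarrow> ('b \<Rightarrow> 'b \<Rightarrow> bool) \<Rightarrow> bool" where
  "strict_total_order_on S r \<longleftrightarrow>
     (\<forall>x\<in>S. \<not> r x x) \<and>
     (\<forall>x\<in>S. \<forall>y\<in>S. \<forall>z\<in>S. r x y \<longrightarrow> r y z \<longrightarrow> r x z) \<and>
     (\<forall>x\<in>S. \<forall>y\<in>S. x \<noteq> y \<longrightarrow> r x y \<or> r y x)"

definition reflection_order :: "'a::euclidean_space set \<Rightarrow> ('a \<Rightarrow> 'a \<Rightarrow> bool) \<Rightarrow> bool" where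
  "reflection_order Dp lhd \<longleftrightarrow> strict_total_order_on Dp lhd \<and>
     (\<forall>\<alpha>\<in>Dp. \<forall>\<beta>\<in>Dp. \<alpha> + \<beta> \<in> Dp \<longrightarrow>
        (lhd \<alpha> (\<alpha> + \<beta>) \<and> lhd (\<alpha> + \<beta>) \<beta>) \<or> (lhd \<beta> (\<alpha> + \<beta>) \<and> lhd (\<alpha> + \<beta>) \<alpha>))"

definition RO :: "'a::euclidean_space \<Rightarrow> 'a set \<Rightarrow> ('a \<Rightarrow> 'a \<Rightarrow> bool) set" where
  "RO \<mu> Dp = {lhd. reflection_order Dp lhd \<and>
      (\<forall>\<alpha>\<in>neg_part Dp \<mu>. \<forall>\<beta>\<in>zero_part Dp \<mu>. lhd \<alpha> \<beta>) \<and>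
      (\<forall>\<beta>\<in>zero_part Dp \<mu>. \<forall>\<gamma>\<in>pos_part Dp \<mu>. lhd \<beta> \<gamma>) \<and>
      (\<forall>\<alpha>\<in>neg_part Dp \<mu>. \<forall>\<gamma>\<in>pos_part Dp \<mu>. lhd \<alpha> \<gamma>)}"

text \<open>An element (v, k) of 'a \<times> real stands for v + k\<delta>. Real affine coroots:
  v a coroot, k an integer.\<close>

definition real_aff_coroot :: "'a::euclidean_space set \<Rightarrow> 'a \<times> real \<Rightarrow> bool" where
  "real_aff_coroot \<Delta> b \<longleftrightarrow> fst b \<in> coroot ` \<Delta> \<and> snd b \<in> \<int>"

definition aff_add :: "'a::euclidean_space \<times> real \<Rightarrow> 'a \<times> real \<Rightarrow> 'a \<times> real" where
  "aff_add a b = (fst a + fst b, snd a + snd b)"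

text \<open>bar(\<beta>): the root whose coroot is the finite part of \<beta>-check.\<close>
definition bar_root :: "'a::euclidean_space \<times> real \<Rightarrow> 'a" where
  "bar_root b = coroot (fst b)"

definition aff_deg :: "'a::euclidean_space \<times> real \<Rightarrow> real" where
  "aff_deg b = snd b"

definition aff_positive :: "'a::euclidean_space set \<Rightarrow> 'a \<times> real \<Rightarrow> bool" where
  "aff_positive Dp b \<longleftrightarrow> aff_deg b > 0 \<or> (aff_deg b = 0 \<and> bar_root b \<in> Dp)"

definition t_trans :: "'a::euclidean_space \<Rightarrow> 'a \<times> real \<Rightarrow> 'a \<times> real" where
  "t_trans \<mu> b = (fst b, snd b - \<mu> \<bullet> fst b)"

definition Inv :: "'a::euclidean_space set \<Rightarrow> 'a set \<Rightarrow> 'a \<Rightarrow> ('a \<times> real) set" where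
  "Inv \<Delta> Dp \<mu> = {b. real_aff_coroot \<Delta> b \<and> aff_positive Dp b \<and>
                     \<not> aff_positive Dp (t_trans \<mu> b)}"

definition d_val :: "'a::euclidean_space \<Rightarrow> 'a \<times> real \<Rightarrow> real" where
  "d_val \<mu> b = aff_deg b / (\<mu> \<bullet> fst b)"

definition prec_ord :: "'a::euclidean_space set \<Rightarrow> 'a \<Rightarrow> ('a \<Rightarrow> 'a \<Rightarrow> bool) \<Rightarrow> 'a \<Rightarrow> 'a \<Rightarrow> bool" where
  "prec_ord Dp \<mu> lhd \<gamma> \<gamma>' \<longleftrightarrow>
     (\<gamma> \<in> pos_part Dp \<mu> \<and> \<gamma>' \<in> uminus ` neg_part Dp \<mu>) \<or>
     (\<gamma> \<in> pos_part Dp \<mu> \<and> \<gamma>' \<in> pos_part Dp \<mu> \<and> lhd \<gamma> \<gamma>') \<or>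
     (\<gamma> \<in> uminus ` neg_part Dp \<mu> \<and> \<gamma>' \<in> uminus ` neg_part Dp \<mu> \<and> lhd (- \<gamma>) (- \<gamma>'))"

definition inv_less :: "'a::euclidean_space set \<Rightarrow> 'a \<Rightarrow> ('a \<Rightarrow> 'a \<Rightarrow> bool) \<Rightarrow>
    'a \<times> real \<Rightarrow> 'a \<times> real \<Rightarrow> bool" where
  "inv_less Dp \<mu> lhd b b' \<longleftrightarrow>
     d_val \<mu> b < d_val \<mu> b' \<or>
     (d_val \<mu> b = d_val \<mu> b' \<and> prec_ord Dp \<mu> lhd (bar_root b') (bar_root b))"

end

theory Submission
  imports Defs
begin

text \<open>An element of Inv(\<lambda>) is the coroot of a root \<gamma> plus k\<delta>; with m = \<langle>\<lambda>, coroot \<gamma>\<rangle>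
  one has 0 \<le> k \<le> m, 0 < m and d = k / m. Both k and m are additive, so the d-value of a sum is
  the mediant of the d-values of the summands, and only ties need thought; they are decided by
  \<prec> on the finite parts \<alpha>, \<beta>, \<gamma>, which satisfy coroot \<gamma> = coroot \<alpha> + coroot \<beta>. In (2), a
  summand outside Inv(\<lambda>) has k \<ge> max m 0, which can only raise the d-value of the other summand.

  The order \<prec> is the restriction to \<Delta>+(\<lambda>)>0 \<union> -\<Delta>+(\<lambda>)<0 of a reflection order on the positive
  system of \<lambda> + \<epsilon>\<rho> (\<epsilon> > 0 small, \<rho> defining \<Delta>+), and reflection orders respect sums of coroots as
  well as sums of roots: a relation coroot \<gamma> = coroot \<alpha> + coroot \<beta> between positive roots lives in
  rank two, where \<gamma> = \<alpha> + k\<beta> (k \<le> 3), 2\<gamma> = \<alpha> + \<beta> or 3\<gamma> = \<alpha> + \<beta>, and in each case \<gamma> is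
  reached from \<alpha> and \<beta> by sums of positive roots, each of which a reflection order places
  between its summands.\<close>

section \<open>Coroots and reduced root systems\<close>

lemma coroot_coroot: "x \<noteq> 0 \<Longrightarrow> coroot (coroot x) = x"
  by (simp add: coroot_def field_simps)

lemma coroot_uminus: "coroot (- x) = - coroot x"
  by (simp add: coroot_def)

lemma coroot_eq_0_iff [simp]: "coroot x = 0 \<longleftrightarrow> x = 0"
  by (simp add: coroot_def)

lemma inner_coroot: "y \<bullet> coroot x = (2 / (x \<bullet> x)) * (y \<bullet> x)"
  by (simp add: coroot_def)

lemma inner_coroot_pos_iff: "0 < y \<bullet> coroot x \<longleftrightarrow> 0 < y \<bullet> x"
  and inner_coroot_neg_iff: "y \<bullet> coroot x < 0 \<longleftrightarrow> y \<bullet> x < 0"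
  and inner_coroot_eq_0_iff: "y \<bullet> coroot x = 0 \<longleftrightarrow> y \<bullet> x = 0"
proof -
  define c where "c = 2 / (x \<bullet> x)"
  have "y \<bullet> coroot x = c * (y \<bullet> x)" by (simp add: coroot_def c_def)
  moreover have "x = 0 \<or> 0 < c" by (auto simp: c_def)
  ultimately show "0 < y \<bullet> coroot x \<longleftrightarrow> 0 < y \<bullet> x" "y \<bullet> coroot x < 0 \<longleftrightarrow> y \<bullet> x < 0"
    "y \<bullet> coroot x = 0 \<longleftrightarrow> y \<bullet> x = 0"
    by (auto simp: zero_less_mult_iff mult_less_0_iff)
qed

lemma pairing_self: "x \<noteq> 0 \<Longrightarrow> pairing x x = 2"
  by (simp add: pairing_def inner_coroot)

lemma pairing_coroot_sum:
  "coroot \<gamma> = coroot \<alpha> + coroot \<beta> \<Longrightarrow> \<gamma> \<noteq> 0 \<Longrightarrow> pairing \<gamma> \<alpha> + pairing \<gamma> \<beta> = 2"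
  using pairing_self[of \<gamma>] by (simp add: pairing_def inner_add_right)

lemma root_of_coroot_sum:
  assumes "coroot \<gamma> = coroot \<alpha> + coroot \<beta>" "\<gamma> \<noteq> 0" "\<alpha> \<noteq> 0" "\<beta> \<noteq> 0"
  shows "(\<alpha> \<bullet> \<alpha> + \<beta> \<bullet> \<beta> + 2 * (\<alpha> \<bullet> \<beta>)) *\<^sub>R \<gamma> = (\<beta> \<bullet> \<beta>) *\<^sub>R \<alpha> + (\<alpha> \<bullet> \<alpha>) *\<^sub>R \<beta>"
proof -
  define A B p where "A = \<alpha> \<bullet> \<alpha>" and "B = \<beta> \<bullet> \<beta>" and "p = \<alpha> \<bullet> \<beta>"
  have "A > 0" "B > 0" using assms by (auto simp: A_def B_def)
  define z where "z = coroot \<alpha> + coroot \<beta>"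
  have z: "z = (2 / A) *\<^sub>R \<alpha> + (2 / B) *\<^sub>R \<beta>"
    by (simp add: z_def coroot_def A_def B_def)
  have zz: "z \<bullet> z = 4 * (A + B + 2 * p) / (A * B)"
    using \<open>A > 0\<close> \<open>B > 0\<close>
    by (simp add: z inner_add_left inner_add_right inner_commute[of \<beta> \<alpha>] A_def[symmetric]
        B_def[symmetric] p_def[symmetric] field_simps)
  have "\<gamma> = coroot z" using assms by (metis coroot_coroot z_def)
  then have \<gamma>: "\<gamma> = (2 / (z \<bullet> z)) *\<^sub>R z" by (simp add: coroot_def)
  then have N: "A + B + 2 * p \<noteq> 0" using zz \<open>\<gamma> \<noteq> 0\<close> by auto
  have "(2 / (z \<bullet> z)) * (2 / A) = B / (A + B + 2 * p)" "(2 / (z \<bullet> z)) * (2 / B) = A / (A + B + 2 * p)"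
    unfolding zz using \<open>A > 0\<close> \<open>B > 0\<close> N by (simp_all add: field_simps)
  then have "\<gamma> = (B / (A + B + 2 * p)) *\<^sub>R \<alpha> + (A / (A + B + 2 * p)) *\<^sub>R \<beta>"
    unfolding \<gamma> z by (simp add: scaleR_add_right)
  then show ?thesis
    using N by (simp add: scaleR_add_right A_def B_def p_def)
qed

lemma reduced_root_system_nonzero: "reduced_root_system \<Delta> \<Longrightarrow> x \<in> \<Delta> \<Longrightarrow> x \<noteq> 0"
  by (auto simp: reduced_root_system_def)

lemma reduced_root_system_reflect:
  "reduced_root_system \<Delta> \<Longrightarrow> x \<in> \<Delta> \<Longrightarrow> y \<in> \<Delta> \<Longrightarrow> y - pairing y x *\<^sub>R x \<in> \<Delta>"
  by (auto simp: reduced_root_system_def)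

lemma reduced_root_system_pairing_Ints:
  "reduced_root_system \<Delta> \<Longrightarrow> x \<in> \<Delta> \<Longrightarrow> y \<in> \<Delta> \<Longrightarrow> pairing y x \<in> \<int>"
  by (auto simp: reduced_root_system_def)

lemma reduced_root_system_multiple:
  "reduced_root_system \<Delta> \<Longrightarrow> x \<in> \<Delta> \<Longrightarrow> c *\<^sub>R x \<in> \<Delta> \<Longrightarrow> c = 1 \<or> c = -1"
  by (auto simp: reduced_root_system_def)

lemma reduced_root_system_uminus:
  assumes "reduced_root_system \<Delta>" "x \<in> \<Delta>"
  shows "- x \<in> \<Delta>"
proof -
  have "x - pairing x x *\<^sub>R x \<in> \<Delta>"
    using assms by (rule reduced_root_system_reflect[OF _ _ assms(2)])
  then show ?thesis
    using assms by (simp add: pairing_self reduced_root_system_nonzero scaleR_2)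
qed

lemma root_inner_square_less:
  assumes \<Delta>: "reduced_root_system \<Delta>" "\<alpha> \<in> \<Delta>" "\<beta> \<in> \<Delta>" and "\<beta> \<noteq> \<alpha>" "\<beta> \<noteq> - \<alpha>"
  shows "(\<alpha> \<bullet> \<beta>)\<^sup>2 < (\<alpha> \<bullet> \<alpha>) * (\<beta> \<bullet> \<beta>)"
proof (rule ccontr)
  define r where "r = (\<alpha> \<bullet> \<beta>) / (\<alpha> \<bullet> \<alpha>)"
  assume "\<not> ?thesis"
  then have eq: "(\<alpha> \<bullet> \<beta>)\<^sup>2 = (\<alpha> \<bullet> \<alpha>) * (\<beta> \<bullet> \<beta>)"
    using Cauchy_Schwarz_ineq[of \<alpha> \<beta>] by linarith
  have "\<alpha> \<bullet> \<alpha> > 0" using \<Delta> reduced_root_system_nonzero by auto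
  have "(\<beta> - r *\<^sub>R \<alpha>) \<bullet> (\<beta> - r *\<^sub>R \<alpha>) = \<beta> \<bullet> \<beta> - 2 * r * (\<alpha> \<bullet> \<beta>) + r\<^sup>2 * (\<alpha> \<bullet> \<alpha>)"
    by (simp add: inner_commute[of \<beta> \<alpha>] power2_eq_square algebra_simps)
  also have "\<dots> = 0"
    using eq \<open>\<alpha> \<bullet> \<alpha> > 0\<close> by (simp add: r_def power2_eq_square field_simps)
  finally have "\<beta> = r *\<^sub>R \<alpha>" by simp
  then show False
    using reduced_root_system_multiple[OF \<Delta>(1,2), of r] \<Delta>(3) assms(4,5) by auto
qed

lemma coroot_ne_double_coroot:
  assumes \<Delta>: "reduced_root_system \<Delta>" "\<alpha> \<in> \<Delta>" "\<gamma> \<in> \<Delta>"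
  shows "coroot \<gamma> \<noteq> coroot \<alpha> + coroot \<alpha>"
proof
  assume "coroot \<gamma> = coroot \<alpha> + coroot \<alpha>"
  also have "\<dots> = coroot ((1 / 2) *\<^sub>R \<alpha>)"
    using reduced_root_system_nonzero[OF \<Delta>(1,2)] by (simp add: coroot_def scaleR_2[symmetric])
  finally have "\<gamma> = (1 / 2) *\<^sub>R \<alpha>"
    using reduced_root_system_nonzero[OF \<Delta>(1)] \<Delta> by (metis coroot_coroot coroot_eq_0_iff)
  then have "2 *\<^sub>R \<gamma> \<in> \<Delta>" using \<Delta>(2) by simp
  from reduced_root_system_multiple[OF \<Delta>(1,3) this] show False by simp
qed

lemma Ints_pos_ge_1: "(x::real) \<in> \<int> \<Longrightarrow> 0 < x \<Longrightarrow> 1 \<le> x"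
  using Ints_nonzero_abs_ge1[of x] by simp

lemma negative_Ints_product_less_4:
  fixes i j :: real
  assumes "i \<in> \<int>" "j \<in> \<int>" "i < 0" "j \<le> i" "i * j < 4"
  shows "i = -1 \<and> (j = -1 \<or> j = -2 \<or> j = -3)"
proof -
  obtain m n :: int where mn: "i = of_int m" "j = of_int n"
    using assms(1,2) by (auto elim!: Ints_cases)
  then have mn_bounds: "m < 0" "n \<le> m" "m * n < 4"
    using assms(3-5) by (simp_all flip: of_int_mult of_int_less_iff of_int_le_iff)
  then have "-m * 1 \<le> -m * -n" "-n * 1 \<le> -n * -m"
    by (intro mult_left_mono; simp)+
  then have "m \<in> {-3, -2, -1}" "n \<in> {-3, -2, -1}"
    using mn_bounds by (auto simp: mult.commute)
  then have "m = -1 \<and> (n = -1 \<or> n = -2 \<or> n = -3)"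
    using mn_bounds by auto
  then show ?thesis unfolding mn by auto
qed

lemma scaleR_3: "(3::real) *\<^sub>R (x::'a::real_vector) = x + x + x"
proof -
  have "(3::real) = 2 + 1" by simp
  then show ?thesis by (simp only: scaleR_add_left scaleR_2 scaleR_one)
qed

lemma pairings_coroot_sum_nonobtuse:
  assumes \<Delta>: "reduced_root_system \<Delta>" "\<alpha> \<in> \<Delta>" "\<beta> \<in> \<Delta>" "\<gamma> \<in> \<Delta>"
    and cr: "coroot \<gamma> = coroot \<alpha> + coroot \<beta>" and "0 \<le> \<alpha> \<bullet> \<beta>"
  shows "pairing \<gamma> \<alpha> = 1" "pairing \<gamma> \<beta> = 1"
proof -
  define A B p where "A = \<alpha> \<bullet> \<alpha>" and "B = \<beta> \<bullet> \<beta>" and "p = \<alpha> \<bullet> \<beta>"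
  have nz: "\<alpha> \<noteq> 0" "\<beta> \<noteq> 0" "\<gamma> \<noteq> 0" using reduced_root_system_nonzero[OF \<Delta>(1)] \<Delta> by auto
  then have "A > 0" "B > 0" by (simp_all add: A_def B_def)
  have \<gamma>: "(A + B + 2 * p) *\<^sub>R \<gamma> = B *\<^sub>R \<alpha> + A *\<^sub>R \<beta>"
    unfolding A_def B_def p_def by (rule root_of_coroot_sum[OF cr nz(3,1,2)])
  have "(A + B + 2 * p) * (\<gamma> \<bullet> \<alpha>) = A * (B + p)" "(A + B + 2 * p) * (\<gamma> \<bullet> \<beta>) = B * (A + p)"
    using arg_cong[OF \<gamma>, of "\<lambda>x. x \<bullet> \<alpha>"] arg_cong[OF \<gamma>, of "\<lambda>x. x \<bullet> \<beta>"]
    by (simp_all add: A_def B_def p_def inner_commute[of \<beta> \<alpha>] algebra_simps)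
  then have "0 < (A + B + 2 * p) * (\<gamma> \<bullet> \<alpha>)" "0 < (A + B + 2 * p) * (\<gamma> \<bullet> \<beta>)"
    using \<open>A > 0\<close> \<open>B > 0\<close> \<open>0 \<le> \<alpha> \<bullet> \<beta>\<close> by (simp_all add: p_def)
  then have "0 < pairing \<gamma> \<alpha>" "0 < pairing \<gamma> \<beta>"
    using \<open>A > 0\<close> \<open>B > 0\<close> \<open>0 \<le> \<alpha> \<bullet> \<beta>\<close>
    by (auto simp: pairing_def inner_coroot_pos_iff p_def zero_less_mult_iff)
  moreover have "pairing \<gamma> \<alpha> \<in> \<int>" "pairing \<gamma> \<beta> \<in> \<int>"
    using \<Delta> reduced_root_system_pairing_Ints[OF \<Delta>(1)] by auto
  moreover have "pairing \<gamma> \<alpha> + pairing \<gamma> \<beta> = 2" using pairing_coroot_sum[OF cr nz(3)] .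
  ultimately show "pairing \<gamma> \<alpha> = 1" "pairing \<gamma> \<beta> = 1"
    using Ints_pos_ge_1 by (metis add_le_cancel_left add_le_cancel_right one_add_one order_antisym)+
qed

lemma coroot_sum_nonobtuse:
  assumes \<Delta>: "reduced_root_system \<Delta>" "\<alpha> \<in> \<Delta>" "\<beta> \<in> \<Delta>" "\<gamma> \<in> \<Delta>"
    and cr: "coroot \<gamma> = coroot \<alpha> + coroot \<beta>" and "0 \<le> \<alpha> \<bullet> \<beta>"
  shows "\<gamma> - \<alpha> \<in> \<Delta>" "\<gamma> - \<beta> \<in> \<Delta>" "\<alpha> + \<beta> = \<gamma> + \<gamma> \<or> \<alpha> + \<beta> = \<gamma> + \<gamma> + \<gamma>"
proof -
  define A B p where "A = \<alpha> \<bullet> \<alpha>" and "B = \<beta> \<bullet> \<beta>" and "p = \<alpha> \<bullet> \<beta>"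
  have nz: "\<alpha> \<noteq> 0" "\<beta> \<noteq> 0" "\<gamma> \<noteq> 0" using reduced_root_system_nonzero[OF \<Delta>(1)] \<Delta> by auto
  then have "A > 0" by (simp add: A_def)
  note pair = pairings_coroot_sum_nonobtuse[OF assms]
  then show "\<gamma> - \<alpha> \<in> \<Delta>" "\<gamma> - \<beta> \<in> \<Delta>"
    using reduced_root_system_reflect[OF \<Delta>(1)] \<Delta> by (metis scaleR_one)+
  have \<gamma>: "(A + B + 2 * p) *\<^sub>R \<gamma> = B *\<^sub>R \<alpha> + A *\<^sub>R \<beta>"
    unfolding A_def B_def p_def by (rule root_of_coroot_sum[OF cr nz(3,1,2)])
  have "(A + B + 2 * p) * (\<gamma> \<bullet> \<alpha>) = A * (B + p)"
    using arg_cong[OF \<gamma>, of "\<lambda>x. x \<bullet> \<alpha>"]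
    by (simp add: A_def B_def p_def inner_commute[of \<beta> \<alpha>] algebra_simps)
  then have "A = B"
    using pair(1) \<open>A > 0\<close> by (simp add: pairing_def inner_coroot A_def[symmetric] field_simps)
  have "\<alpha> \<noteq> \<beta>" using coroot_ne_double_coroot[OF \<Delta>(1,2,4)] cr by blast
  then have "0 < (\<alpha> - \<beta>) \<bullet> (\<alpha> - \<beta>)" by simp
  then have "p < A" using \<open>A = B\<close>
    by (simp add: inner_diff_left inner_diff_right A_def B_def p_def inner_commute[of \<beta> \<alpha>])
  have "pairing \<beta> \<alpha> = 2 * p / A"
    by (simp add: pairing_def inner_coroot A_def p_def inner_commute[of \<beta> \<alpha>])
  moreover have "pairing \<beta> \<alpha> \<in> \<int>" using \<Delta> reduced_root_system_pairing_Ints[OF \<Delta>(1)] by auto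
  ultimately obtain c :: int where "2 * p / A = of_int c" by (auto elim: Ints_cases)
  then have c: "of_int c * A = 2 * p" using \<open>A > 0\<close> by (simp add: field_simps)
  have "0 \<le> of_int c * A" "of_int c * A < 2 * A"
    unfolding c using \<open>0 \<le> \<alpha> \<bullet> \<beta>\<close> \<open>p < A\<close> by (simp_all add: p_def)
  then have "c = 0 \<or> c = 1" using \<open>A > 0\<close> by (auto simp: zero_le_mult_iff)
  then have "2 * p = 0 \<or> 2 * p = A" using c by auto
  then have "A *\<^sub>R (\<alpha> + \<beta>) = A *\<^sub>R (\<gamma> + \<gamma>) \<or> A *\<^sub>R (\<alpha> + \<beta>) = A *\<^sub>R (\<gamma> + \<gamma> + \<gamma>)"
  proof (elim disjE)
    assume "2 * p = 0"
    then show ?thesis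
      using \<gamma> \<open>A = B\<close> by (simp add: scaleR_add_right scaleR_2[symmetric] mult.commute)
  next
    assume "2 * p = A"
    then show ?thesis
      using \<gamma> \<open>A = B\<close> by (simp add: scaleR_add_right scaleR_3[symmetric] mult.commute)
  qed
  then show "\<alpha> + \<beta> = \<gamma> + \<gamma> \<or> \<alpha> + \<beta> = \<gamma> + \<gamma> + \<gamma>" using \<open>A > 0\<close> by simp
qed

lemma obtuse_cartan_integers:
  assumes \<Delta>: "reduced_root_system \<Delta>" "\<alpha> \<in> \<Delta>" "\<beta> \<in> \<Delta>"
    and "\<alpha> \<bullet> \<beta> < 0" "\<beta> \<bullet> \<beta> \<le> \<alpha> \<bullet> \<alpha>" "\<beta> \<noteq> - \<alpha>"
  shows "pairing \<beta> \<alpha> = -1" "pairing \<alpha> \<beta> = -1 \<or> pairing \<alpha> \<beta> = -2 \<or> pairing \<alpha> \<beta> = -3"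
proof -
  define A B p where "A = \<alpha> \<bullet> \<alpha>" and "B = \<beta> \<bullet> \<beta>" and "p = \<alpha> \<bullet> \<beta>"
  have "A > 0" "B > 0" using reduced_root_system_nonzero[OF \<Delta>(1)] \<Delta> by (auto simp: A_def B_def)
  have ij: "pairing \<beta> \<alpha> = 2 * p / A" "pairing \<alpha> \<beta> = 2 * p / B"
    by (simp_all add: pairing_def inner_coroot A_def B_def p_def inner_commute[of \<beta> \<alpha>])
  have "\<beta> \<noteq> \<alpha>" using \<open>\<alpha> \<bullet> \<beta> < 0\<close> by (metis inner_ge_zero not_le)
  then have "p\<^sup>2 < A * B"
    unfolding A_def B_def p_def using root_inner_square_less[OF \<Delta>] \<open>\<beta> \<noteq> - \<alpha>\<close> by blast
  then have "pairing \<beta> \<alpha> * pairing \<alpha> \<beta> < 4"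
    unfolding ij using \<open>A > 0\<close> \<open>B > 0\<close> by (simp add: power2_eq_square field_simps)
  moreover have "pairing \<beta> \<alpha> < 0" "pairing \<alpha> \<beta> \<le> pairing \<beta> \<alpha>"
    unfolding ij using \<open>A > 0\<close> \<open>B > 0\<close> \<open>\<alpha> \<bullet> \<beta> < 0\<close> \<open>\<beta> \<bullet> \<beta> \<le> \<alpha> \<bullet> \<alpha>\<close>
    by (simp_all add: p_def A_def B_def divide_neg_pos divide_left_mono_neg)
  moreover have "pairing \<beta> \<alpha> \<in> \<int>" "pairing \<alpha> \<beta> \<in> \<int>"
    using \<Delta> reduced_root_system_pairing_Ints[OF \<Delta>(1)] by auto
  ultimately show "pairing \<beta> \<alpha> = -1" "pairing \<alpha> \<beta> = -1 \<or> pairing \<alpha> \<beta> = -2 \<or> pairing \<alpha> \<beta> = -3"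
    using negative_Ints_product_less_4 by blast+
qed

lemma coroot_sum_obtuse:
  assumes \<Delta>: "reduced_root_system \<Delta>" "\<alpha> \<in> \<Delta>" "\<beta> \<in> \<Delta>" "\<gamma> \<in> \<Delta>"
    and cr: "coroot \<gamma> = coroot \<alpha> + coroot \<beta>"
    and "\<alpha> \<bullet> \<beta> < 0" "\<beta> \<bullet> \<beta> \<le> \<alpha> \<bullet> \<alpha>" "\<beta> \<noteq> - \<alpha>"
  shows "\<alpha> + \<beta> \<in> \<Delta>"
    and "\<gamma> = \<alpha> + \<beta> \<or> \<gamma> = \<alpha> + \<beta> + \<beta> \<or> (\<alpha> + \<beta> + \<beta> \<in> \<Delta> \<and> \<gamma> = \<alpha> + \<beta> + \<beta> + \<beta>)"
proof -
  define A B p j where "A = \<alpha> \<bullet> \<alpha>" and "B = \<beta> \<bullet> \<beta>" and "p = \<alpha> \<bullet> \<beta>" and "j = pairing \<alpha> \<beta>"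
  have nz: "\<alpha> \<noteq> 0" "\<beta> \<noteq> 0" "\<gamma> \<noteq> 0" using reduced_root_system_nonzero[OF \<Delta>(1)] \<Delta> by auto
  then have "A > 0" "B > 0" by (simp_all add: A_def B_def)
  note cartan = obtuse_cartan_integers[OF \<Delta>(1-3) assms(6-8)]
  show "\<alpha> + \<beta> \<in> \<Delta>"
    using reduced_root_system_reflect[OF \<Delta>(1-3)] cartan(1) by (simp add: add.commute)
  have "2 * p = - A" "2 * p = j * B"
    using cartan(1) \<open>A > 0\<close> \<open>B > 0\<close>
    by (simp_all add: j_def pairing_def inner_coroot A_def B_def p_def inner_commute[of \<beta> \<alpha>] field_simps)
  then have "A + B + 2 * p = B" "A = - j * B" by simp_all
  moreover have "(A + B + 2 * p) *\<^sub>R \<gamma> = B *\<^sub>R \<alpha> + A *\<^sub>R \<beta>"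
    unfolding A_def B_def p_def by (rule root_of_coroot_sum[OF cr nz(3,1,2)])
  ultimately have "B *\<^sub>R \<gamma> = B *\<^sub>R (\<alpha> + (- j) *\<^sub>R \<beta>)"
    by (simp add: scaleR_add_right scaleR_diff_right mult.commute)
  then have \<gamma>: "\<gamma> = \<alpha> + (- j) *\<^sub>R \<beta>" using \<open>B > 0\<close> by simp
  have "\<alpha> + \<beta> + \<beta> \<in> \<Delta>" if "j = -3"
  proof -
    have "pairing (\<alpha> + \<beta>) \<beta> = -1"
      using pairing_self[OF nz(2)] that unfolding j_def by (simp add: pairing_def inner_add_left)
    then show ?thesis
      using reduced_root_system_reflect[OF \<Delta>(1,3) \<open>\<alpha> + \<beta> \<in> \<Delta>\<close>] by simp
  qed
  then show "\<gamma> = \<alpha> + \<beta> \<or> \<gamma> = \<alpha> + \<beta> + \<beta> \<or> (\<alpha> + \<beta> + \<beta> \<in> \<Delta> \<and> \<gamma> = \<alpha> + \<beta> + \<beta> + \<beta>)"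
    using cartan(2) \<gamma> unfolding j_def[symmetric] by (auto simp: scaleR_2 scaleR_3 add.assoc)
qed

section \<open>Reflection orders are compatible with sums of coroots\<close>

definition strictly_between :: "('b \<Rightarrow> 'b \<Rightarrow> bool) \<Rightarrow> 'b \<Rightarrow> 'b \<Rightarrow> 'b \<Rightarrow> bool" where
  "strictly_between r x y z \<longleftrightarrow> (r x y \<and> r y z) \<or> (r z y \<and> r y x)"

lemma strictly_between_commute: "strictly_between r x y z \<longleftrightarrow> strictly_between r z y x"
  unfolding strictly_between_def by blast

context
  fixes S :: "'b set" and r :: "'b \<Rightarrow> 'b \<Rightarrow> bool"
  assumes order: "strict_total_order_on S r"
begin

lemma strictly_between_trans:
  assumes "a \<in> S" "b \<in> S" "c \<in> S" "d \<in> S"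
    and "strictly_between r a b c" "strictly_between r b d c"
  shows "strictly_between r a d c"
  using order assms unfolding strictly_between_def strict_total_order_on_def by metis

lemma strictly_between_shrink:
  assumes "a \<in> S" "b \<in> S" "c \<in> S" "d \<in> S"
    and "strictly_between r a b d" "strictly_between r b c d"
  shows "strictly_between r a b c"
  using order assms unfolding strictly_between_def strict_total_order_on_def by metis

lemma strictly_between_split:
  assumes "a \<in> S" "b \<in> S" "c \<in> S" "d \<in> S" "e \<in> S"
    and "strictly_between r d c e" "strictly_between r c a d" "strictly_between r c b e"
  shows "strictly_between r a c b"
  using order assms unfolding strictly_between_def strict_total_order_on_def by metis

lemma strictly_between_less_left:
  assumes "x \<in> S" "y \<in> S" "z \<in> S" "strictly_between r x y z" "r y z"
  shows "r x y"
  using order assms unfolding strictly_between_def strict_total_order_on_def by metis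

lemma strictly_between_orient:
  assumes "x \<in> S" "y \<in> S" "z \<in> S" "strictly_between r x y z" "r x z"
  shows "r x y" "r y z"
  using order assms unfolding strictly_between_def strict_total_order_on_def by blast+

end

text \<open>Positive systems are described by their closure properties, so that the locale also covers
  the lexicographic positive system used below.\<close>

locale reflection_ordered_system =
  fixes \<Delta> :: "'a::euclidean_space set" and P :: "'a set" and lhd :: "'a \<Rightarrow> 'a \<Rightarrow> bool"
  assumes reduced: "reduced_root_system \<Delta>"
    and subset: "P \<subseteq> \<Delta>"
    and uminus_mem_iff: "x \<in> \<Delta> \<Longrightarrow> - x \<in> P \<longleftrightarrow> x \<notin> P"
    and add_mem: "x \<in> P \<Longrightarrow> y \<in> P \<Longrightarrow> x + y \<in> \<Delta> \<Longrightarrow> x + y \<in> P"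
    and reflection_order: "reflection_order P lhd"
begin

lemma order: "strict_total_order_on P lhd"
  using reflection_order by (simp add: reflection_order_def)

lemma lhd_irrefl: "x \<in> P \<Longrightarrow> \<not> lhd x x"
  and lhd_trans: "x \<in> P \<Longrightarrow> y \<in> P \<Longrightarrow> z \<in> P \<Longrightarrow> lhd x y \<Longrightarrow> lhd y z \<Longrightarrow> lhd x z"
  and lhd_total: "x \<in> P \<Longrightarrow> y \<in> P \<Longrightarrow> x \<noteq> y \<Longrightarrow> lhd x y \<or> lhd y x"
  using order unfolding strict_total_order_on_def by blast+

lemma mem_root: "x \<in> P \<Longrightarrow> x \<in> \<Delta>"
  using subset by blast

lemma between_add: "x \<in> P \<Longrightarrow> y \<in> P \<Longrightarrow> x + y \<in> P \<Longrightarrow> strictly_between lhd x (x + y) y"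
  using reflection_order by (simp add: reflection_order_def strictly_between_def)

lemma between_add_right:
  assumes "\<alpha> \<in> P" "x \<in> P" "\<beta> \<in> P" "x + \<beta> \<in> \<Delta>" "strictly_between lhd \<alpha> x \<beta>"
  shows "x + \<beta> \<in> P" "strictly_between lhd \<alpha> (x + \<beta>) \<beta>"
proof -
  show "x + \<beta> \<in> P" using assms by (intro add_mem)
  then show "strictly_between lhd \<alpha> (x + \<beta>) \<beta>"
    using assms between_add strictly_between_trans[OF order] by blast
qed

lemma between_of_midpoint:
  assumes P: "\<alpha> \<in> P" "\<beta> \<in> P" "\<gamma> \<in> P" and mid: "\<alpha> + \<beta> = \<gamma> + \<gamma>" and "\<gamma> - \<alpha> \<in> \<Delta>"
  shows "strictly_between lhd \<alpha> \<gamma> \<beta>"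
proof (cases "\<gamma> - \<alpha> \<in> P")
  case True
  have "\<alpha> + (\<gamma> - \<alpha>) = \<gamma>" "\<gamma> + (\<gamma> - \<alpha>) = \<beta>"
    using mid by (simp_all add: algebra_simps)
  then have "strictly_between lhd \<alpha> \<gamma> (\<gamma> - \<alpha>)" "strictly_between lhd \<gamma> \<beta> (\<gamma> - \<alpha>)"
    using between_add[OF P(1) True] between_add[OF P(3) True] P by simp_all
  then show ?thesis using strictly_between_shrink[OF order] P True by blast
next
  case False
  then have \<delta>: "\<alpha> - \<gamma> \<in> P" using uminus_mem_iff \<open>\<gamma> - \<alpha> \<in> \<Delta>\<close> by fastforce
  have "\<gamma> + (\<alpha> - \<gamma>) = \<alpha>" "\<beta> + (\<alpha> - \<gamma>) = \<gamma>"
    using mid by (simp_all add: algebra_simps)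
  then have "strictly_between lhd \<gamma> \<alpha> (\<alpha> - \<gamma>)" "strictly_between lhd \<beta> \<gamma> (\<alpha> - \<gamma>)"
    using between_add[OF P(3) \<delta>] between_add[OF P(2) \<delta>] P by simp_all
  then show ?thesis
    using strictly_between_shrink[OF order] strictly_between_commute P \<delta> by metis
qed

lemma between_of_third_of_mem:
  assumes P: "\<alpha> \<in> P" "\<beta> \<in> P" "\<gamma> \<in> P" "\<gamma> - \<alpha> \<in> P" and "\<beta> - \<gamma> \<in> \<Delta>"
    and third: "\<alpha> + \<beta> = \<gamma> + \<gamma> + \<gamma>"
  shows "strictly_between lhd \<alpha> \<gamma> \<beta>"
proof -
  have sums: "\<alpha> + (\<gamma> - \<alpha>) = \<gamma>" "\<gamma> + (\<gamma> - \<alpha>) = \<beta> - \<gamma>" "\<gamma> + (\<beta> - \<gamma>) = \<beta>"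
    using third by (simp_all add: algebra_simps)
  have "\<beta> - \<gamma> \<in> P" using add_mem[OF P(3,4)] \<open>\<beta> - \<gamma> \<in> \<Delta>\<close> sums by simp
  then have "strictly_between lhd \<alpha> \<gamma> (\<gamma> - \<alpha>)" "strictly_between lhd \<gamma> (\<beta> - \<gamma>) (\<gamma> - \<alpha>)"
    "strictly_between lhd \<gamma> \<beta> (\<beta> - \<gamma>)"
    using between_add[OF P(1,4)] between_add[OF P(3,4)] between_add[OF P(3) \<open>\<beta> - \<gamma> \<in> P\<close>] P sums
    by simp_all
  then show ?thesis using strictly_between_shrink[OF order] P \<open>\<beta> - \<gamma> \<in> P\<close> by meson
qed

lemma between_of_third:
  assumes P: "\<alpha> \<in> P" "\<beta> \<in> P" "\<gamma> \<in> P" and \<Delta>: "\<gamma> - \<alpha> \<in> \<Delta>" "\<gamma> - \<beta> \<in> \<Delta>"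
    and third: "\<alpha> + \<beta> = \<gamma> + \<gamma> + \<gamma>"
  shows "strictly_between lhd \<alpha> \<gamma> \<beta>"
proof -
  have \<Delta>': "\<alpha> - \<gamma> \<in> \<Delta>" "\<beta> - \<gamma> \<in> \<Delta>"
    using \<Delta> reduced_root_system_uminus[OF reduced] by force+
  consider "\<gamma> - \<alpha> \<in> P" | "\<gamma> - \<beta> \<in> P" | "\<alpha> - \<gamma> \<in> P" "\<beta> - \<gamma> \<in> P"
    using uminus_mem_iff \<Delta> by fastforce
  then show ?thesis
  proof cases
    case 1
    then show ?thesis using between_of_third_of_mem P \<Delta>' third by blast
  next
    case 2
    then show ?thesis
      using between_of_third_of_mem[of \<beta> \<alpha> \<gamma>] P \<Delta>' third strictly_between_commute
      by (metis add.commute)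
  next
    case 3
    have "(\<alpha> - \<gamma>) + (\<beta> - \<gamma>) = \<gamma>" "\<gamma> + (\<alpha> - \<gamma>) = \<alpha>" "\<gamma> + (\<beta> - \<gamma>) = \<beta>"
      using third by (simp_all add: algebra_simps)
    then have "strictly_between lhd (\<alpha> - \<gamma>) \<gamma> (\<beta> - \<gamma>)"
      "strictly_between lhd \<gamma> \<alpha> (\<alpha> - \<gamma>)" "strictly_between lhd \<gamma> \<beta> (\<beta> - \<gamma>)"
      using between_add[OF 3] between_add[OF P(3) 3(1)] between_add[OF P(3) 3(2)] P by simp_all
    then show ?thesis using strictly_between_split[OF order] P 3 by blast
  qed
qed

lemma between_coroot_add_obtuse:
  assumes P: "\<alpha> \<in> P" "\<beta> \<in> P" "\<gamma> \<in> P" and cr: "coroot \<gamma> = coroot \<alpha> + coroot \<beta>"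
    and "\<alpha> \<bullet> \<beta> < 0" "\<beta> \<bullet> \<beta> \<le> \<alpha> \<bullet> \<alpha>"
  shows "strictly_between lhd \<alpha> \<gamma> \<beta>"
proof -
  have "\<beta> \<noteq> - \<alpha>" using uminus_mem_iff mem_root P(1,2) by auto
  note string = coroot_sum_obtuse[OF reduced mem_root[OF P(1)] mem_root[OF P(2)] mem_root[OF P(3)]
      cr assms(5,6) this]
  then have "\<alpha> + \<beta> \<in> P" using add_mem P by blast
  then have "strictly_between lhd \<alpha> (\<alpha> + \<beta>) \<beta>" using between_add P by blast
  then show ?thesis
    using string(2) between_add_right[OF P(1) \<open>\<alpha> + \<beta> \<in> P\<close> P(2)] between_add_right[OF P(1) _ P(2)]
      mem_root[OF P(3)] by metis
qed

theorem between_coroot_add: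
  assumes P: "\<alpha> \<in> P" "\<beta> \<in> P" "\<gamma> \<in> P" and cr: "coroot \<gamma> = coroot \<alpha> + coroot \<beta>"
  shows "strictly_between lhd \<alpha> \<gamma> \<beta>"
proof -
  consider "0 \<le> \<alpha> \<bullet> \<beta>" | "\<alpha> \<bullet> \<beta> < 0" "\<beta> \<bullet> \<beta> \<le> \<alpha> \<bullet> \<alpha>" | "\<beta> \<bullet> \<alpha> < 0" "\<alpha> \<bullet> \<alpha> \<le> \<beta> \<bullet> \<beta>"
    by (cases "0 \<le> \<alpha> \<bullet> \<beta>"; cases "\<beta> \<bullet> \<beta> \<le> \<alpha> \<bullet> \<alpha>") (auto simp: inner_commute)
  then show ?thesis
  proof cases
    case 1
    note roots = coroot_sum_nonobtuse[OF reduced mem_root[OF P(1)] mem_root[OF P(2)] mem_root[OF P(3)]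
        cr 1]
    then show ?thesis using between_of_midpoint[OF P] between_of_third[OF P] by blast
  next
    case 2
    then show ?thesis using between_coroot_add_obtuse assms by blast
  next
    case 3
    then have "strictly_between lhd \<beta> \<gamma> \<alpha>"
      using between_coroot_add_obtuse[of \<beta> \<alpha> \<gamma>] assms by (simp add: add.commute)
    then show ?thesis using strictly_between_commute by metis
  qed
qed

end

section \<open>The twisted positive system\<close>

lemma pos_part_eq: "pos_part Dp \<mu> = {x \<in> Dp. 0 < \<mu> \<bullet> x}"
  and zero_part_eq: "zero_part Dp \<mu> = {x \<in> Dp. \<mu> \<bullet> x = 0}"
  and neg_part_eq: "neg_part Dp \<mu> = {x \<in> Dp. \<mu> \<bullet> x < 0}"
  by (simp_all add: pos_part_def zero_part_def neg_part_def pairing_def inner_coroot_pos_iff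
      inner_coroot_eq_0_iff inner_coroot_neg_iff)

definition inversion_roots :: "'a::euclidean_space set \<Rightarrow> 'a \<Rightarrow> 'a set" where
  "inversion_roots Dp \<mu> = pos_part Dp \<mu> \<union> uminus ` neg_part Dp \<mu>"

text \<open>The positive system of \<mu> + \<epsilon>\<rho> for small \<epsilon> > 0, where \<rho> defines \<open>Dp\<close>, consists of
  \<Delta>+(\<mu>)\<ge>0 and -\<Delta>+(\<mu>)<0. The twisted order lists the first part by \<open>lhd\<close> (so \<Delta>+(\<mu>)=0 comes
  first) and then the second part by \<open>lhd\<close> of the negatives; on \<open>inversion_roots\<close> it is
  \<open>prec_ord\<close>.\<close>

definition twisted_positive_system :: "'a::euclidean_space set \<Rightarrow> 'a \<Rightarrow> 'a set" where
  "twisted_positive_system Dp \<mu> = {x \<in> Dp. 0 \<le> \<mu> \<bullet> x} \<union> {x. - x \<in> Dp \<and> 0 < \<mu> \<bullet> x}"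

definition twisted_order :: "'a::uminus set \<Rightarrow> ('a \<Rightarrow> 'a \<Rightarrow> bool) \<Rightarrow> 'a \<Rightarrow> 'a \<Rightarrow> bool" where
  "twisted_order Dp lhd x y \<longleftrightarrow> (if x \<in> Dp then y \<notin> Dp \<or> lhd x y else y \<notin> Dp \<and> lhd (- x) (- y))"

locale weight_compatible_order =
  fixes \<Delta> Dp :: "'a::euclidean_space set" and \<rho> \<mu> :: 'a and lhd :: "'a \<Rightarrow> 'a \<Rightarrow> bool"
  assumes reduced: "reduced_root_system \<Delta>"
    and Dp_eq: "Dp = {x \<in> \<Delta>. 0 < \<rho> \<bullet> x}"
    and regular: "\<forall>x\<in>\<Delta>. \<rho> \<bullet> x \<noteq> 0"
    and compatible: "lhd \<in> RO \<mu> Dp"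
begin

lemma uminus_mem_Dp_iff: "x \<in> \<Delta> \<Longrightarrow> - x \<in> Dp \<longleftrightarrow> x \<notin> Dp"
  using regular reduced_root_system_uminus[OF reduced] by (auto simp: Dp_eq)

lemma root_iff_mem_Dp: "x \<in> \<Delta> \<longleftrightarrow> x \<in> Dp \<or> - x \<in> Dp"
  using uminus_mem_Dp_iff reduced_root_system_uminus[OF reduced, of "- x"] by (auto simp: Dp_eq)

sublocale Dp: reflection_ordered_system \<Delta> Dp lhd
proof
  show "x + y \<in> Dp" if "x \<in> Dp" "y \<in> Dp" "x + y \<in> \<Delta>" for x y
    using that by (simp add: Dp_eq inner_add_right)
qed (use reduced compatible uminus_mem_Dp_iff in \<open>auto simp: Dp_eq RO_def\<close>)

lemma lhd_if_weight_less:
  assumes "u \<in> Dp" "v \<in> Dp" "\<mu> \<bullet> u < 0 \<and> 0 \<le> \<mu> \<bullet> v \<or> \<mu> \<bullet> u \<le> 0 \<and> 0 < \<mu> \<bullet> v"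
  shows "lhd u v"
proof -
  consider "\<mu> \<bullet> u < 0" "\<mu> \<bullet> v = 0" | "\<mu> \<bullet> u < 0" "0 < \<mu> \<bullet> v" | "\<mu> \<bullet> u = 0" "0 < \<mu> \<bullet> v"
    using assms(3) by linarith
  then show ?thesis
    using compatible assms(1,2) unfolding RO_def pos_part_eq zero_part_eq neg_part_eq by cases auto
qed

lemma twisted_mem_iff:
  "x \<in> twisted_positive_system Dp \<mu> \<longleftrightarrow> x \<in> \<Delta> \<and> (0 < \<mu> \<bullet> x \<or> (\<mu> \<bullet> x = 0 \<and> 0 < \<rho> \<bullet> x))"
  using regular reduced_root_system_uminus[OF reduced]
  by (auto simp: twisted_positive_system_def Dp_eq) (metis minus_minus)+

lemma twisted_order_Dp: "u \<in> Dp \<Longrightarrow> v \<in> Dp \<Longrightarrow> twisted_order Dp lhd u v \<longleftrightarrow> lhd u v"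
  by (simp add: twisted_order_def)

lemma not_mem_Dp_if_uminus: "- u \<in> Dp \<Longrightarrow> u \<notin> Dp"
  using uminus_mem_Dp_iff reduced_root_system_uminus[OF reduced] Dp.mem_root by force

lemma twisted_order_uminus:
  "- u \<in> Dp \<Longrightarrow> - v \<in> Dp \<Longrightarrow> twisted_order Dp lhd u v \<longleftrightarrow> lhd (- u) (- v)"
  using not_mem_Dp_if_uminus by (simp add: twisted_order_def)

lemma twisted_mem_cases:
  assumes "x \<in> twisted_positive_system Dp \<mu>"
  obtains "x \<in> Dp" "0 \<le> \<mu> \<bullet> x" | "- x \<in> Dp" "0 < \<mu> \<bullet> x"
  using assms by (auto simp: twisted_positive_system_def)

lemma twisted_between_add_of_mem_Dp:
  assumes S: "x \<in> twisted_positive_system Dp \<mu>" "y \<in> twisted_positive_system Dp \<mu>"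
      "x + y \<in> twisted_positive_system Dp \<mu>" and "x \<in> Dp"
  shows "strictly_between (twisted_order Dp lhd) x (x + y) y"
proof -
  have "0 \<le> \<mu> \<bullet> x" "x + y \<in> \<Delta>" using S \<open>x \<in> Dp\<close> by (auto simp: twisted_mem_iff)
  show ?thesis
  proof (cases "y \<in> Dp")
    case True
    then have "x + y \<in> Dp" using Dp.add_mem \<open>x \<in> Dp\<close> \<open>x + y \<in> \<Delta>\<close> by blast
    then show ?thesis
      using Dp.between_add[OF \<open>x \<in> Dp\<close> True] twisted_order_Dp \<open>x \<in> Dp\<close> True
      by (simp add: strictly_between_def)
  next
    case y_not_Dp: False
    then have "- y \<in> Dp" "0 < \<mu> \<bullet> y" using S(2) by (auto elim: twisted_mem_cases)
    show ?thesis
    proof (cases "x + y \<in> Dp")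
      case True
      have "strictly_between lhd (- y) x (x + y)"
        using Dp.between_add[OF True \<open>- y \<in> Dp\<close>] \<open>x \<in> Dp\<close> strictly_between_commute by fastforce
      moreover have "lhd (- y) (x + y)"
        using \<open>0 < \<mu> \<bullet> y\<close> \<open>0 \<le> \<mu> \<bullet> x\<close>
        by (intro lhd_if_weight_less[OF \<open>- y \<in> Dp\<close> True]) (simp add: inner_add_right)
      ultimately have "lhd x (x + y)"
        using strictly_between_orient[OF Dp.order] \<open>- y \<in> Dp\<close> \<open>x \<in> Dp\<close> True by blast
      then show ?thesis
        using \<open>x \<in> Dp\<close> True y_not_Dp by (simp add: strictly_between_def twisted_order_def)
    next
      case False
      then have "- (x + y) \<in> Dp" using uminus_mem_Dp_iff \<open>x + y \<in> \<Delta>\<close> by blast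
      have "strictly_between lhd (- (x + y)) (- y) x"
        using Dp.between_add[OF \<open>x \<in> Dp\<close> \<open>- (x + y) \<in> Dp\<close>] \<open>- y \<in> Dp\<close> strictly_between_commute
        by fastforce
      moreover have "lhd (- (x + y)) x"
        using \<open>0 < \<mu> \<bullet> y\<close> \<open>0 \<le> \<mu> \<bullet> x\<close>
        by (intro lhd_if_weight_less[OF \<open>- (x + y) \<in> Dp\<close> \<open>x \<in> Dp\<close>]) (simp add: inner_diff_right)
      ultimately have "lhd (- (x + y)) (- y)"
        using strictly_between_orient[OF Dp.order] \<open>- y \<in> Dp\<close> \<open>x \<in> Dp\<close> \<open>- (x + y) \<in> Dp\<close> by blast
      then show ?thesis
        using \<open>x \<in> Dp\<close> False y_not_Dp \<open>- y \<in> Dp\<close> \<open>- (x + y) \<in> Dp\<close> twisted_order_uminus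
        by (simp add: strictly_between_def twisted_order_def)
    qed
  qed
qed

lemma twisted_order_total: "strict_total_order_on (twisted_positive_system Dp \<mu>) (twisted_order Dp lhd)"
  unfolding strict_total_order_on_def twisted_order_def
proof (intro conjI ballI impI)
  fix x y z
  assume S: "x \<in> twisted_positive_system Dp \<mu>" "y \<in> twisted_positive_system Dp \<mu>"
    "z \<in> twisted_positive_system Dp \<mu>"
  have Dp_cases: "w \<in> Dp \<or> - w \<in> Dp" if "w \<in> twisted_positive_system Dp \<mu>" for w
    using that by (auto elim: twisted_mem_cases)
  show "\<not> (if x \<in> Dp then x \<notin> Dp \<or> lhd x x else x \<notin> Dp \<and> lhd (- x) (- x))"
    using Dp_cases[OF S(1)] Dp.lhd_irrefl by auto
  show "if x \<in> Dp then z \<notin> Dp \<or> lhd x z else z \<notin> Dp \<and> lhd (- x) (- z)"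
    if "if x \<in> Dp then y \<notin> Dp \<or> lhd x y else y \<notin> Dp \<and> lhd (- x) (- y)"
      "if y \<in> Dp then z \<notin> Dp \<or> lhd y z else z \<notin> Dp \<and> lhd (- y) (- z)"
    using that Dp_cases S Dp.lhd_trans by (smt (verit))
  show "(if x \<in> Dp then y \<notin> Dp \<or> lhd x y else y \<notin> Dp \<and> lhd (- x) (- y)) \<or>
      (if y \<in> Dp then x \<notin> Dp \<or> lhd y x else x \<notin> Dp \<and> lhd (- y) (- x))" if "x \<noteq> y"
    using that Dp_cases S Dp.lhd_total[of x y] Dp.lhd_total[of "- x" "- y"] by auto
qed

lemma twisted_between_add:
  assumes S: "x \<in> twisted_positive_system Dp \<mu>" "y \<in> twisted_positive_system Dp \<mu>"
      "x + y \<in> twisted_positive_system Dp \<mu>"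
  shows "strictly_between (twisted_order Dp lhd) x (x + y) y"
proof -
  consider "x \<in> Dp" | "y \<in> Dp" | "- x \<in> Dp" "- y \<in> Dp"
    using S(1,2) by (auto elim: twisted_mem_cases)
  then show ?thesis
  proof cases
    case 1
    then show ?thesis using twisted_between_add_of_mem_Dp S by blast
  next
    case 2
    then show ?thesis
      using twisted_between_add_of_mem_Dp[of y x] S strictly_between_commute by (metis add.commute)
  next
    case 3
    have "x + y \<in> \<Delta>" using S(3) by (simp add: twisted_mem_iff)
    then have "- (x + y) \<in> \<Delta>" by (rule reduced_root_system_uminus[OF reduced])
    then have "- (x + y) \<in> Dp" using Dp.add_mem[OF 3] by simp
    then have "strictly_between lhd (- x) (- (x + y)) (- y)" using Dp.between_add[OF 3] by simp
    then show ?thesis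
      using twisted_order_uminus 3 \<open>- (x + y) \<in> Dp\<close> by (simp add: strictly_between_def)
  qed
qed

sublocale twisted: reflection_ordered_system \<Delta> "twisted_positive_system Dp \<mu>" "twisted_order Dp lhd"
proof
  show "x + y \<in> twisted_positive_system Dp \<mu>"
    if "x \<in> twisted_positive_system Dp \<mu>" "y \<in> twisted_positive_system Dp \<mu>" "x + y \<in> \<Delta>" for x y
    using that by (auto simp: twisted_mem_iff inner_add_right)
  show "reflection_order (twisted_positive_system Dp \<mu>) (twisted_order Dp lhd)"
    using twisted_order_total twisted_between_add by (simp add: reflection_order_def strictly_between_def)
qed (use reduced regular reduced_root_system_uminus[OF reduced] in \<open>auto simp: twisted_mem_iff\<close>)

lemma inversion_roots_eq: "inversion_roots Dp \<mu> = {x \<in> \<Delta>. 0 < \<mu> \<bullet> x}"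
proof -
  have "x \<in> uminus ` neg_part Dp \<mu> \<longleftrightarrow> - x \<in> Dp \<and> 0 < \<mu> \<bullet> x" for x
    by (force simp: neg_part_eq)
  then show ?thesis
    by (auto simp: inversion_roots_def pos_part_eq root_iff_mem_Dp)
qed

lemma inversion_roots_subset_twisted: "inversion_roots Dp \<mu> \<subseteq> twisted_positive_system Dp \<mu>"
  by (auto simp: inversion_roots_eq twisted_mem_iff)

lemma zero_part_subset_twisted: "zero_part Dp \<mu> \<subseteq> twisted_positive_system Dp \<mu>"
  by (auto simp: zero_part_eq twisted_positive_system_def)

lemma prec_ord_iff_twisted_order:
  assumes "x \<in> inversion_roots Dp \<mu>" "y \<in> inversion_roots Dp \<mu>"
  shows "prec_ord Dp \<mu> lhd x y \<longleftrightarrow> twisted_order Dp lhd x y"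
proof -
  have char: "w \<in> pos_part Dp \<mu> \<longleftrightarrow> w \<in> Dp" "w \<in> uminus ` neg_part Dp \<mu> \<longleftrightarrow> w \<notin> Dp"
    if "w \<in> inversion_roots Dp \<mu>" for w
    using that not_mem_Dp_if_uminus by (auto simp: inversion_roots_def pos_part_eq neg_part_eq)
  have "prec_ord Dp \<mu> lhd x y \<longleftrightarrow>
      (if x \<in> Dp then y \<notin> Dp \<or> lhd x y else y \<notin> Dp \<and> lhd (- x) (- y))"
    unfolding prec_ord_def char[OF assms(1)] char[OF assms(2)] by simp
  then show ?thesis by (simp add: twisted_order_def)
qed

lemma twisted_order_zero_part:
  assumes "z \<in> zero_part Dp \<mu>" "x \<in> inversion_roots Dp \<mu>"
  shows "twisted_order Dp lhd z x"
proof (cases "x \<in> Dp")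
  case True
  then have "lhd z x"
    using assms by (intro lhd_if_weight_less) (auto simp: zero_part_eq inversion_roots_eq)
  moreover have "z \<in> Dp" using assms(1) by (simp add: zero_part_eq)
  ultimately show ?thesis using True by (simp add: twisted_order_def)
qed (use assms(1) in \<open>simp add: twisted_order_def zero_part_eq\<close>)

lemma between_prec_ord_coroot_add:
  assumes "x \<in> inversion_roots Dp \<mu>" "y \<in> inversion_roots Dp \<mu>" "z \<in> inversion_roots Dp \<mu>"
    and "coroot z = coroot x + coroot y"
  shows "strictly_between (prec_ord Dp \<mu> lhd) x z y"
  using twisted.between_coroot_add[of x y z] assms inversion_roots_subset_twisted
  by (auto simp: strictly_between_def prec_ord_iff_twisted_order)

lemma twisted_order_coroot_add:
  assumes S: "x \<in> twisted_positive_system Dp \<mu>" "y \<in> twisted_positive_system Dp \<mu>"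
      "z \<in> twisted_positive_system Dp \<mu>"
    and "coroot z = coroot x + coroot y" "twisted_order Dp lhd y x"
  shows "twisted_order Dp lhd z x"
proof -
  have "strictly_between (twisted_order Dp lhd) y z x"
    using twisted.between_coroot_add[OF S(1,2,3)] assms(4) strictly_between_commute by metis
  then show ?thesis using strictly_between_orient[OF twisted.order S(2,3,1)] assms(5) by blast
qed

lemma twisted_order_coroot_diff:
  assumes S: "x \<in> twisted_positive_system Dp \<mu>" "y \<in> twisted_positive_system Dp \<mu>"
      "z \<in> twisted_positive_system Dp \<mu>"
    and "coroot x = coroot z + coroot y" "twisted_order Dp lhd x y"
  shows "twisted_order Dp lhd z x"
  using twisted.between_coroot_add[OF S(3,2,1)] strictly_between_less_left[OF twisted.order S(3,1,2)] assms(4,5)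
  by blast

end

section \<open>Inversion sets of translations\<close>

lemma mediant_less_iff:
  fixes k k' m m' :: real
  assumes "0 < m" "0 < m + m'"
  shows "k / m < (k + k') / (m + m') \<longleftrightarrow> k * m' < k' * m"
proof -
  have "k / m * (m * (m + m')) = k * (m + m')" "(k + k') / (m + m') * (m * (m + m')) = (k + k') * m"
    using assms by simp_all
  moreover have "k / m < (k + k') / (m + m') \<longleftrightarrow>
      k / m * (m * (m + m')) < (k + k') / (m + m') * (m * (m + m'))"
    by (rule mult_less_cancel_right_pos[symmetric]) (use assms in simp)
  ultimately show ?thesis by (simp add: algebra_simps)
qed

lemma mediant_eq_iff:
  fixes k k' m m' :: real
  assumes "0 < m" "0 < m + m'"
  shows "k / m = (k + k') / (m + m') \<longleftrightarrow> k * m' = k' * m"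
  using assms by (simp add: frac_eq_eq algebra_simps)

lemma aff_add_simps [simp]: "fst (aff_add a b) = fst a + fst b" "snd (aff_add a b) = snd a + snd b"
  by (simp_all add: aff_add_def)

lemma aff_positive_iff: "aff_positive Dp b \<longleftrightarrow> 0 < snd b \<or> snd b = 0 \<and> bar_root b \<in> Dp"
  by (simp add: aff_positive_def aff_deg_def)

lemma mem_Inv_iff:
  "b \<in> Inv \<Delta> Dp \<mu> \<longleftrightarrow> real_aff_coroot \<Delta> b \<and> aff_positive Dp b \<and>
     (snd b < \<mu> \<bullet> fst b \<or> snd b = \<mu> \<bullet> fst b \<and> bar_root b \<notin> Dp)"
  by (auto simp: Inv_def aff_positive_def aff_deg_def t_trans_def bar_root_def)

lemma inv_less_iff:
  "inv_less Dp \<mu> lhd b b' \<longleftrightarrow>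
     snd b / (\<mu> \<bullet> fst b) < snd b' / (\<mu> \<bullet> fst b') \<or>
     snd b / (\<mu> \<bullet> fst b) = snd b' / (\<mu> \<bullet> fst b') \<and> prec_ord Dp \<mu> lhd (bar_root b') (bar_root b)"
  by (simp add: inv_less_def d_val_def aff_deg_def)

lemma real_aff_coroot_bar_root:
  assumes "reduced_root_system \<Delta>" "real_aff_coroot \<Delta> b"
  shows "bar_root b \<in> \<Delta>" "coroot (bar_root b) = fst b"
proof -
  obtain x where "x \<in> \<Delta>" "fst b = coroot x" using assms(2) by (auto simp: real_aff_coroot_def)
  moreover have "x \<noteq> 0" using reduced_root_system_nonzero[OF assms(1)] \<open>x \<in> \<Delta>\<close> by blast
  ultimately show "bar_root b \<in> \<Delta>" "coroot (bar_root b) = fst b"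
    by (simp_all add: bar_root_def coroot_coroot)
qed

lemma cross_mult_le:
  fixes k1 k2 m1 m2 :: real
  assumes "0 \<le> k1" "k1 \<le> m1" "0 < m1" "0 \<le> k2" "m2 \<le> k2"
  shows "k1 * m2 \<le> k2 * m1"
proof (cases "0 < m2")
  case True
  then have "k1 * m2 \<le> m1 * m2" "m2 * m1 \<le> k2 * m1"
    using assms(2,3,5) by (simp_all add: mult_right_mono)
  then show ?thesis by (simp add: mult.commute)
next
  case False
  then have "k1 * m2 \<le> 0" "0 \<le> k2 * m1"
    using assms by (simp_all add: mult_nonneg_nonpos)
  then show ?thesis by linarith
qed

lemma cross_mult_eq_cases:
  fixes k1 k2 m1 m2 :: real
  assumes "0 \<le> k1" "k1 \<le> m1" "0 < m1" "0 \<le> k2" "m2 \<le> k2" "k1 * m2 = k2 * m1"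
  shows "0 < m2 \<and> k1 = m1 \<and> k2 = m2 \<or> m2 = 0 \<and> k2 = 0 \<or> m2 < 0 \<and> k1 = 0 \<and> k2 = 0"
proof (cases "0 < m2")
  case True
  then have "k1 * m2 \<le> m1 * m2" "m2 * m1 \<le> k2 * m1"
    using assms(2,3,5) by (simp_all add: mult_right_mono)
  moreover have "m1 * m2 = m2 * m1" by (rule mult.commute)
  ultimately have "k1 * m2 = m1 * m2" "k2 * m1 = m2 * m1" using assms(6) by linarith+
  then show ?thesis using True assms(3) by simp
next
  case False
  then have "k1 * m2 \<le> 0" "0 \<le> k2 * m1"
    using assms(1,3,4) by (simp_all add: mult_nonneg_nonpos)
  then have "k1 * m2 = 0" "k2 * m1 = 0" using assms(6) by linarith+
  then show ?thesis using False assms(3) by auto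
qed

context weight_compatible_order
begin

lemma bar_root_mem_Dp_iff:
  assumes "real_aff_coroot \<Delta> b"
  shows "bar_root b \<in> Dp \<longleftrightarrow> 0 < \<rho> \<bullet> fst b"
  using real_aff_coroot_bar_root[OF reduced assms] inner_coroot_pos_iff[of \<rho> "bar_root b"]
  by (simp add: Dp_eq)

lemma mem_Inv_D:
  assumes "b \<in> Inv \<Delta> Dp \<mu>"
  shows "0 \<le> snd b" "snd b \<le> \<mu> \<bullet> fst b" "0 < \<mu> \<bullet> fst b" "bar_root b \<in> inversion_roots Dp \<mu>"
proof -
  show "0 \<le> snd b" "snd b \<le> \<mu> \<bullet> fst b" using assms by (auto simp: mem_Inv_iff aff_positive_iff)
  then show "0 < \<mu> \<bullet> fst b" using assms by (auto simp: mem_Inv_iff aff_positive_iff)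
  moreover have "real_aff_coroot \<Delta> b" using assms by (simp add: mem_Inv_iff)
  ultimately show "bar_root b \<in> inversion_roots Dp \<mu>"
    using real_aff_coroot_bar_root[OF reduced] inner_coroot_pos_iff[of \<mu> "bar_root b"]
    by (simp add: inversion_roots_eq)
qed

lemma coroot_bar_root_aff_add:
  "real_aff_coroot \<Delta> a \<Longrightarrow> real_aff_coroot \<Delta> b \<Longrightarrow> real_aff_coroot \<Delta> (aff_add a b) \<Longrightarrow>
    coroot (bar_root (aff_add a b)) = coroot (bar_root a) + coroot (bar_root b)"
  using real_aff_coroot_bar_root(2)[OF reduced] by simp

lemma aff_add_mem_Inv:
  assumes "a \<in> Inv \<Delta> Dp \<mu>" "b \<in> Inv \<Delta> Dp \<mu>"
    and "real_aff_coroot \<Delta> (aff_add a b)" "aff_positive Dp (aff_add a b)"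
  shows "aff_add a b \<in> Inv \<Delta> Dp \<mu>"
proof -
  have "snd a \<le> \<mu> \<bullet> fst a" "snd b \<le> \<mu> \<bullet> fst b" using assms(1,2) by (simp_all add: mem_Inv_D)
  moreover have "bar_root (aff_add a b) \<notin> Dp" if "snd a = \<mu> \<bullet> fst a" "snd b = \<mu> \<bullet> fst b"
  proof -
    have "\<not> 0 < \<rho> \<bullet> fst a" "\<not> 0 < \<rho> \<bullet> fst b"
      using that assms(1,2) bar_root_mem_Dp_iff[of a] bar_root_mem_Dp_iff[of b] by (auto simp: mem_Inv_iff)
    then show ?thesis using bar_root_mem_Dp_iff[OF assms(3)] by (simp add: inner_add_right)
  qed
  ultimately show ?thesis
    using assms(3,4) by (auto simp: mem_Inv_iff inner_add_right)
qed

lemma mem_Inv_if_aff_add_mem_Inv: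
  assumes "real_aff_coroot \<Delta> a" "aff_positive Dp a" "real_aff_coroot \<Delta> b" "aff_positive Dp b"
    and "aff_add a b \<in> Inv \<Delta> Dp \<mu>"
  shows "a \<in> Inv \<Delta> Dp \<mu> \<or> b \<in> Inv \<Delta> Dp \<mu>"
proof (rule ccontr)
  assume "\<not> ?thesis"
  then have a: "\<mu> \<bullet> fst a \<le> snd a" "snd a = \<mu> \<bullet> fst a \<Longrightarrow> 0 < \<rho> \<bullet> fst a"
    and b: "\<mu> \<bullet> fst b \<le> snd b" "snd b = \<mu> \<bullet> fst b \<Longrightarrow> 0 < \<rho> \<bullet> fst b"
    using assms bar_root_mem_Dp_iff[of a] bar_root_mem_Dp_iff[of b] by (auto simp: mem_Inv_iff)
  have c: "snd a + snd b \<le> \<mu> \<bullet> fst a + \<mu> \<bullet> fst b"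
    "snd a + snd b = \<mu> \<bullet> fst a + \<mu> \<bullet> fst b \<Longrightarrow> \<not> 0 < \<rho> \<bullet> fst a + \<rho> \<bullet> fst b"
    using assms(5) bar_root_mem_Dp_iff[of "aff_add a b"] by (auto simp: mem_Inv_iff inner_add_right)
  show False using a b c by linarith
qed

lemma between_inv_less_aff_add:
  assumes "a \<in> Inv \<Delta> Dp \<mu>" "b \<in> Inv \<Delta> Dp \<mu>" "aff_add a b \<in> Inv \<Delta> Dp \<mu>"
  shows "strictly_between (inv_less Dp \<mu> lhd) a (aff_add a b) b"
proof -
  define k1 k2 m1 m2 where "k1 = snd a" and "k2 = snd b" and "m1 = \<mu> \<bullet> fst a" and "m2 = \<mu> \<bullet> fst b"
  have "0 < m1" "0 < m2" using assms(1,2) mem_Inv_D by (simp_all add: m1_def m2_def)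
  then have "0 < m1 + m2" "0 < m2 + m1" by simp_all
  have ratios:
    "k1 / m1 < (k1 + k2) / (m1 + m2) \<longleftrightarrow> k1 * m2 < k2 * m1"
    "k1 / m1 = (k1 + k2) / (m1 + m2) \<longleftrightarrow> k1 * m2 = k2 * m1"
    "k2 / m2 < (k1 + k2) / (m1 + m2) \<longleftrightarrow> k2 * m1 < k1 * m2"
    "k2 / m2 = (k1 + k2) / (m1 + m2) \<longleftrightarrow> k2 * m1 = k1 * m2"
    using mediant_less_iff[OF \<open>0 < m1\<close> \<open>0 < m1 + m2\<close>] mediant_eq_iff[OF \<open>0 < m1\<close> \<open>0 < m1 + m2\<close>]
      mediant_less_iff[OF \<open>0 < m2\<close> \<open>0 < m2 + m1\<close>, of k2 k1]
      mediant_eq_iff[OF \<open>0 < m2\<close> \<open>0 < m2 + m1\<close>, of k2 k1]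
    by (simp_all add: add.commute)
  have "strictly_between (prec_ord Dp \<mu> lhd) (bar_root a) (bar_root (aff_add a b)) (bar_root b)"
    using assms by (intro between_prec_ord_coroot_add coroot_bar_root_aff_add mem_Inv_D)
      (simp_all add: mem_Inv_iff)
  then show ?thesis
    using ratios unfolding strictly_between_def inv_less_iff
    by (simp add: inner_add_right k1_def k2_def m1_def m2_def) (smt (verit))
qed

lemma prec_ord_bar_root_aff_add:
  assumes a: "a \<in> Inv \<Delta> Dp \<mu>" and b: "real_aff_coroot \<Delta> b" "aff_positive Dp b" "b \<notin> Inv \<Delta> Dp \<mu>"
    and c: "aff_add a b \<in> Inv \<Delta> Dp \<mu>" and ratio: "snd a * (\<mu> \<bullet> fst b) = snd b * (\<mu> \<bullet> fst a)"
  shows "prec_ord Dp \<mu> lhd (bar_root (aff_add a b)) (bar_root a)"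
proof -
  define x y z where "x = bar_root a" and "y = bar_root b" and "z = bar_root (aff_add a b)"
  have inv: "x \<in> inversion_roots Dp \<mu>" "z \<in> inversion_roots Dp \<mu>"
    using mem_Inv_D(4) a c by (simp_all add: x_def z_def)
  then have S: "x \<in> twisted_positive_system Dp \<mu>" "z \<in> twisted_positive_system Dp \<mu>"
    using inversion_roots_subset_twisted by blast+
  have y: "y \<in> \<Delta>" "coroot y = fst b" using real_aff_coroot_bar_root[OF reduced b(1)] by (simp_all add: y_def)
  have cr: "coroot z = coroot x + coroot y"
    using coroot_bar_root_aff_add a b c by (simp add: x_def y_def z_def mem_Inv_iff)
  have a_bounds: "0 \<le> snd a" "snd a \<le> \<mu> \<bullet> fst a" "0 < \<mu> \<bullet> fst a" using mem_Inv_D a by auto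
  have x_Dp: "snd a = \<mu> \<bullet> fst a \<Longrightarrow> x \<notin> Dp" "snd a = 0 \<Longrightarrow> x \<in> Dp"
    using a by (auto simp: mem_Inv_iff aff_positive_iff x_def)
  have b_bounds: "0 \<le> snd b" "\<mu> \<bullet> fst b \<le> snd b"
    using b by (auto simp: mem_Inv_iff aff_positive_iff)
  have y_Dp: "snd b = \<mu> \<bullet> fst b \<Longrightarrow> y \<in> Dp" "snd b = 0 \<Longrightarrow> y \<in> Dp"
    using b by (auto simp: mem_Inv_iff aff_positive_iff y_def)
  from cross_mult_eq_cases[OF a_bounds b_bounds ratio]
  have "twisted_order Dp lhd z x"
  proof (elim disjE conjE)
    assume "0 < \<mu> \<bullet> fst b" "snd a = \<mu> \<bullet> fst a" "snd b = \<mu> \<bullet> fst b"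
    then have "x \<notin> Dp" "y \<in> Dp" "0 < \<mu> \<bullet> y"
      using x_Dp y_Dp y(2) inner_coroot_pos_iff[of \<mu> y] by auto
    then have "y \<in> twisted_positive_system Dp \<mu>" "twisted_order Dp lhd y x"
      by (auto simp: twisted_order_def twisted_positive_system_def)
    then show ?thesis using twisted_order_coroot_add S cr by blast
  next
    assume "\<mu> \<bullet> fst b = 0" "snd b = 0"
    then have "y \<in> zero_part Dp \<mu>" using y_Dp y(2) inner_coroot_eq_0_iff[of \<mu> y] by (simp add: zero_part_eq)
    then show ?thesis
      using twisted_order_zero_part inv(1) zero_part_subset_twisted twisted_order_coroot_add S cr by blast
  next
    assume "\<mu> \<bullet> fst b < 0" "snd a = 0" "snd b = 0"
    then have "x \<in> Dp" "y \<in> Dp" "\<mu> \<bullet> y < 0"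
      using x_Dp y_Dp y(2) inner_coroot_neg_iff[of \<mu> y] by auto
    then have "- y \<in> twisted_positive_system Dp \<mu>" "twisted_order Dp lhd x (- y)"
      using not_mem_Dp_if_uminus[of "- y"] by (auto simp: twisted_order_def twisted_positive_system_def)
    moreover have "coroot x = coroot z + coroot (- y)" using cr by (simp add: coroot_uminus)
    ultimately show ?thesis using twisted_order_coroot_diff S by blast
  qed
  then show ?thesis using prec_ord_iff_twisted_order inv by (simp add: x_def z_def)
qed

lemma inv_less_aff_add:
  assumes a: "a \<in> Inv \<Delta> Dp \<mu>" and b: "real_aff_coroot \<Delta> b" "aff_positive Dp b" "b \<notin> Inv \<Delta> Dp \<mu>"
    and c: "aff_add a b \<in> Inv \<Delta> Dp \<mu>"
  shows "inv_less Dp \<mu> lhd a (aff_add a b)"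
proof -
  define k1 k2 m1 m2 where "k1 = snd a" and "k2 = snd b" and "m1 = \<mu> \<bullet> fst a" and "m2 = \<mu> \<bullet> fst b"
  have a_bounds: "0 \<le> k1" "k1 \<le> m1" "0 < m1" using mem_Inv_D a by (auto simp: k1_def m1_def)
  have b_bounds: "0 \<le> k2" "m2 \<le> k2" using b by (auto simp: mem_Inv_iff aff_positive_iff k2_def m2_def)
  have "0 < m1 + m2" using mem_Inv_D(3)[OF c] by (simp add: m1_def m2_def inner_add_right)
  from cross_mult_le[OF a_bounds b_bounds]
  consider "k1 * m2 < k2 * m1" | "k1 * m2 = k2 * m1" by linarith
  then show ?thesis
  proof cases
    case 1
    then show ?thesis
      using mediant_less_iff[OF \<open>0 < m1\<close> \<open>0 < m1 + m2\<close>]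
      by (simp add: inv_less_iff inner_add_right k1_def k2_def m1_def m2_def)
  next
    case 2
    then show ?thesis
      using mediant_eq_iff[OF \<open>0 < m1\<close> \<open>0 < m1 + m2\<close>] prec_ord_bar_root_aff_add[OF a b c]
      by (simp add: inv_less_iff inner_add_right k1_def k2_def m1_def m2_def)
  qed
qed

lemma inv_less_aff_add_of_mem_Inv:
  assumes a: "real_aff_coroot \<Delta> a" "aff_positive Dp a" and b: "real_aff_coroot \<Delta> b" "aff_positive Dp b"
    and c: "aff_add a b \<in> Inv \<Delta> Dp \<mu>"
  shows "a \<in> Inv \<Delta> Dp \<mu> \<and> inv_less Dp \<mu> lhd a (aff_add a b) \<or>
    b \<in> Inv \<Delta> Dp \<mu> \<and> inv_less Dp \<mu> lhd b (aff_add a b)"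
proof -
  have commute: "aff_add b a = aff_add a b" by (simp add: aff_add_def add.commute)
  consider "a \<in> Inv \<Delta> Dp \<mu>" "b \<in> Inv \<Delta> Dp \<mu>" | "a \<in> Inv \<Delta> Dp \<mu>" "b \<notin> Inv \<Delta> Dp \<mu>"
    | "b \<in> Inv \<Delta> Dp \<mu>" "a \<notin> Inv \<Delta> Dp \<mu>"
    using mem_Inv_if_aff_add_mem_Inv[OF a b c] by blast
  then show ?thesis
  proof cases
    case 1
    then show ?thesis using between_inv_less_aff_add[OF 1 c] by (auto simp: strictly_between_def)
  next
    case 2
    then show ?thesis using inv_less_aff_add[OF 2(1) b 2(2) c] by blast
  next
    case 3
    then show ?thesis using inv_less_aff_add[OF 3(1) a 3(2)] c by (simp add: commute)
  qed
qed

end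

theorem proposition3p11:
  fixes \<Delta> Dp :: "'a::euclidean_space set" and \<mu> :: 'a and lhd :: "'a \<Rightarrow> 'a \<Rightarrow> bool"
  assumes "irreducible_root_system \<Delta>"
    and "Dp \<subseteq> \<Delta>" and "positive_system \<Delta> Dp"
    and "\<mu> \<in> weight_lattice \<Delta>"
    and "lhd \<in> RO \<mu> Dp"
  shows "(\<forall>a\<in>Inv \<Delta> Dp \<mu>. \<forall>b\<in>Inv \<Delta> Dp \<mu>.
            real_aff_coroot \<Delta> (aff_add a b) \<and> aff_positive Dp (aff_add a b) \<longrightarrow>
              aff_add a b \<in> Inv \<Delta> Dp \<mu> \<and>
              ((inv_less Dp \<mu> lhd a (aff_add a b) \<and> inv_less Dp \<mu> lhd (aff_add a b) b) \<or>
               (inv_less Dp \<mu> lhd b (aff_add a b) \<and> inv_less Dp \<mu> lhd (aff_add a b) a)))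
       \<and> (\<forall>a b. real_aff_coroot \<Delta> a \<and> aff_positive Dp a \<and>
               real_aff_coroot \<Delta> b \<and> aff_positive Dp b \<and> aff_add a b \<in> Inv \<Delta> Dp \<mu> \<longrightarrow>
              (a \<in> Inv \<Delta> Dp \<mu> \<and> inv_less Dp \<mu> lhd a (aff_add a b)) \<or>
              (b \<in> Inv \<Delta> Dp \<mu> \<and> inv_less Dp \<mu> lhd b (aff_add a b)))"
proof -
  obtain \<rho> where "\<forall>x\<in>\<Delta>. \<rho> \<bullet> x \<noteq> 0" "Dp = {x \<in> \<Delta>. 0 < \<rho> \<bullet> x}"
    using assms(3) by (auto simp: positive_system_def)
  then interpret weight_compatible_order \<Delta> Dp \<rho> \<mu> lhd
    using assms(1,5) by unfold_locales (simp_all add: irreducible_root_system_def)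
  show ?thesis
    using aff_add_mem_Inv between_inv_less_aff_add inv_less_aff_add_of_mem_Inv
    by (auto simp: strictly_between_def)
qed

end
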